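(* Let $\sim$ (for each $N$) be an equivalence relation on $\{1,\dots,N\}^2$ with $(p,q)\sim(q,p)$ satisfying conditions (C2) and (C3). Let $k\ge 4$ be even, $\pi\in\mathcal B_{k/2}$, and suppose $\{m,m+1\}\in\pi$ with $1\le m\le k-2$; let $\tilde\pi:=\pi\setminus^\bullet\{m,m+1\}\in\mathcal B_{k/2-1}$. Then, as $N\to\infty$, $$\#\overline{E}^{(N)}_k(\pi)\le N\cdot\#\overline{E}^{(N)}_{k-2}(\tilde\pi)+o\big(N^{1+k/2}\big).$$
   Context: Conditions on $\sim$ (as $N\to\infty$): (C2) $\max_{p,q,r}\#\{s:(p,q)\sim(r,s)\}\le B<\infty$ with $B$ independent of $N$; (C3) $\#\{(p,q,r)\in\{1,\dots,N\}^3:(p,q)\sim(q,r),\ r\neq p\}=o(N^2)$. A pair-partition of $\{1,\dots,k\}$ is a partition all of whose blocks have exactly two elements; it is crossing if there exist $1\le a<b<c<d\le k$ with $\{a,c\},\{b,d\}\in\pi$, and non-crossing otherwise. For even $k$, $\mathcal B_{k/2}$ denotes the set of non-crossing pair-partitions of $\{1,\dots,k\}$. For $k\ge 4$, $\pi\in\mathcal B_{k/2}$ and a block $\{m,m+1\}\in\pi$ with $1\le m\le k-2$, $\pi\setminus^\bullet\{m,m+1\}\in\mathcal B_{k/2-1}$ denotes the pair-partition of $\{1,\dots,k-2\}$ obtained by deleting the block $\{m,m+1\}$ and relabelling every remaining element $a>m$ as $a-2$. $\pi$-adopted sequences. Let $\mathcal G$ be a countable set and $\pi\in\mathcal B_{k/2}$.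 A sequence $g=(g_1,\dots,g_k)\in\mathcal G^k$ is $\pi$-adopted, defined recursively in $k$: for $k=2$ (so $\pi=\{\{1,2\}\}$), iff $g_1\neq g_2$; for $k\ge 4$, iff for every block of $\pi$ of the form $\{m,m+1\}$ with $1\le m\le k-2$: (a) $g_m=g_{m+2}$ and $g_{m+1}\neq g_s$ for all $s\neq m+1$; and (b) $(g_1,\dots,g_m,g_{m+3},\dots,g_k)$ is $\pi\setminus^\bullet\{m,m+1\}$-adopted. For a partition $\pi$ of $\{1,\dots,k\}$, $\mathcal E^{(N)}_k(\pi)$ is the set of $i=(i_1,\dots,i_k)\in\{1,\dots,N\}^k$ such that, with $i_{k+1}:=i_1$, for all $l,m$: $l,m$ lie in the same block of $\pi$ iff $(i_l,i_{l+1})\sim(i_m,i_{m+1})$. For $\pi\in\mathcal B_{k/2}$, $\overline{E}^{(N)}_k(\pi)$ is the set of those $i\in\mathcal E^{(N)}_k(\pi)$ which are not $\pi$-adopted (as sequences in $\mathcal G^k$ with $\mathcal G=\{1,\dots,N\}$). *)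

theory Defs
  imports Main "HOL-Library.Landau_Symbols"
begin

definition pair_partition :: "nat \<Rightarrow> nat set set \<Rightarrow> bool" where
  "pair_partition k \<pi> \<longleftrightarrow>
     \<Union>\<pi> = {1..k} \<and> (\<forall>b\<in>\<pi>. card b = 2) \<and>
     (\<forall>b\<in>\<pi>. \<forall>c\<in>\<pi>. b \<noteq> c \<longrightarrow> b \<inter> c = {})"

definition crossing :: "nat set set \<Rightarrow> bool" where
  "crossing \<pi> \<longleftrightarrow> (\<exists>a b c d. a < b \<and> b < c \<and> c < d \<and> {a, c} \<in> \<pi> \<and> {b, d} \<in> \<pi>)"

text \<open>NCPP k \<pi> means: k is even and \<pi> belongs to B_{k/2}.\<close>
definition NCPP :: "nat \<Rightarrow> nat set set \<Rightarrow> bool" where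
  "NCPP k \<pi> \<longleftrightarrow> even k \<and> pair_partition k \<pi> \<and> \<not> crossing \<pi>"

definition remove_block :: "nat set set \<Rightarrow> nat \<Rightarrow> nat set set" where
  "remove_block \<pi> m =
     (\<lambda>b. (\<lambda>a. if a > m then a - 2 else a) ` b) ` (\<pi> - {{m, m + 1}})"

text \<open>Sequences g = (g_1,...,g_k) are lists with g_l = g ! (l - 1).
  Deleting entries g_{m+1}, g_{m+2} gives (g_1,...,g_m,g_{m+3},...,g_k).\<close>
definition del2 :: "nat \<Rightarrow> 'a list \<Rightarrow> 'a list" where
  "del2 m g = take m g @ drop (m + 2) g"

fun adopted_aux :: "nat \<Rightarrow> nat set set \<Rightarrow> 'a list \<Rightarrow> bool" where
  "adopted_aux 0 \<pi> g = False"
| "adopted_aux (Suc 0) \<pi> g = (g ! 0 \<noteq> g ! 1)"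
| "adopted_aux (Suc (Suc n)) \<pi> g =
     (\<forall>m. 1 \<le> m \<and> m \<le> length g - 2 \<and> {m, m + 1} \<in> \<pi> \<longrightarrow>
        (g ! (m - 1) = g ! (m + 1) \<and>
         (\<forall>s\<in>{1..length g}. s \<noteq> m + 1 \<longrightarrow> g ! m \<noteq> g ! (s - 1)) \<and>
         adopted_aux (Suc n) (remove_block \<pi> m) (del2 m g)))"

definition adopted :: "nat set set \<Rightarrow> 'a list \<Rightarrow> bool" where
  "adopted \<pi> g = adopted_aux (length g div 2) \<pi> g"

text \<open>The set E_k^(N)(pi): i_l = i ! (l - 1), and i_{l+1} = i ! (l mod k) (so i_{k+1} = i_1).\<close>
definition Eset :: "(nat \<Rightarrow> nat \<times> nat \<Rightarrow> nat \<times> nat \<Rightarrow> bool) \<Rightarrow> nat \<Rightarrow> nat \<Rightarrow> nat set set \<Rightarrow> nat list set" where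
  "Eset R N k \<pi> = {i. length i = k \<and> set i \<subseteq> {1..N} \<and>
     (\<forall>l\<in>{1..k}. \<forall>m\<in>{1..k}.
        (\<exists>b\<in>\<pi>. l \<in> b \<and> m \<in> b) \<longleftrightarrow>
        R N (i ! (l - 1), i ! (l mod k)) (i ! (m - 1), i ! (m mod k)))}"

definition Ebar :: "(nat \<Rightarrow> nat \<times> nat \<Rightarrow> nat \<times> nat \<Rightarrow> bool) \<Rightarrow> nat \<Rightarrow> nat \<Rightarrow> nat set set \<Rightarrow> nat list set" where
  "Ebar R N k \<pi> = {i \<in> Eset R N k \<pi>. \<not> adopted \<pi> i}"

end

theory Submission
  imports Defs
begin

text \<open>Split the non-adopted words \<open>i\<close> according to the block \<open>{m, m + 1}\<close>, writing
  \<open>i_l\<close> for the 1-based entries. If \<open>i_m \<noteq> i_(m+2)\<close>, then \<open>(i_m, i_(m+1), i_(m+2))\<close> is one of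
  the \<open>o(N^2)\<close> triples of (C3). If \<open>i_m = i_(m+2)\<close> but \<open>i_(m+1)\<close> occurs elsewhere in the word,
  one entry is forced and another has at most \<open>k\<close> choices. In both cases, reading the word
  cyclically from the block, an entry closing a pair whose partner pair is already known has at
  most \<open>B\<close> choices by (C2), and at most \<open>k/2 - 1\<close> entries remain free; this gives
  \<open>o(N^(1 + k/2))\<close> words.

  Otherwise conditions (a) and (b) hold at the block. Adoptedness can be verified through any single
  block of adjacent positions, because the conditions at two disjoint blocks survive the deletion of
  either block and the two deletions commute. Hence deleting the block gives a non-adopted word of
  \<open>Ebar R N (k - 2) (remove_block \<pi> m)\<close>, which together with the deleted entry \<open>i_(m+1)\<close>
  determines \<open>i\<close>.\<close>

section \<open>Deleting an adjacent block\<close>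

text \<open>The relabelling performed by \<open>remove_block\<close>; on 0-based list indices it is also
  the reindexing performed by \<open>del2\<close>.\<close>
definition shift2 :: "nat \<Rightarrow> nat \<Rightarrow> nat" where
  "shift2 m x = (if m < x then x - 2 else x)"

lemma remove_block_eq: "remove_block \<pi> m = (\<lambda>b. shift2 m ` b) ` (\<pi> - {{m, m + 1}})"
  unfolding remove_block_def shift2_def by simp

lemma length_del2: "m + 2 \<le> length g \<Longrightarrow> length (del2 m g) = length g - 2"
  unfolding del2_def by auto

lemma nth_del2: "j < length g - 2 \<Longrightarrow> del2 m g ! j = (if j < m then g ! j else g ! (j + 2))"
  unfolding del2_def by (auto simp: nth_append min_def)

lemma nth_del2_shift2:
  assumes "m + 1 < length g" "j < length g" "j \<noteq> m" "j \<noteq> m + 1"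
  shows "del2 m g ! shift2 m j = g ! j"
proof (cases "j < m")
  case True thus ?thesis using assms nth_del2[of j g m] by (simp add: shift2_def)
next
  case False
  hence "shift2 m j = j - 2" "\<not> j - 2 < m" "j - 2 + 2 = j" using assms by (auto simp: shift2_def)
  thus ?thesis using assms nth_del2[of "j - 2" g m] by simp
qed

text \<open>If the two neighbours of the deleted pair agree, deleting positions \<open>m, m + 1\<close> is the
  same as deleting \<open>m - 1, m\<close>, so every entry except the one at \<open>m\<close> survives.\<close>
lemma nth_del2_shift2_returning:
  assumes "g ! (m - 1) = g ! (m + 1)" "1 \<le> m" "m + 1 < length g" "j < length g" "j \<noteq> m"
  shows "del2 m g ! shift2 m j = g ! j"
proof (cases "j = m + 1")
  case True
  have "shift2 m (m + 1) = shift2 m (m - 1)" using assms(2) by (simp add: shift2_def)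
  thus ?thesis using True assms nth_del2_shift2[of m g "m - 1"] by simp
qed (use assms nth_del2_shift2 in auto)

lemma block_disjoint:
  "pairwise disjnt \<pi> \<Longrightarrow> b \<in> \<pi> \<Longrightarrow> {m, m + 1} \<in> \<pi> \<Longrightarrow> b \<noteq> {m, m + 1} \<Longrightarrow> b \<inter> {m, m + 1} = {}"
  by (meson disjnt_def pairwiseD)

lemma blocks_separated:
  fixes m m' :: nat
  assumes "pairwise disjnt \<pi>" "{m, m + 1} \<in> \<pi>" "{m', m' + 1} \<in> \<pi>" "m' \<noteq> m"
  shows "m' + 1 < m \<or> m + 1 < m'"
proof -
  have "{m', m' + 1} \<noteq> {m, m + 1}"
  proof
    assume "{m', m' + 1} = {m, m + 1}"
    hence "m' \<in> {m, m + 1}" "m \<in> {m', m' + 1}" by blast+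
    thus False using assms(4) by auto
  qed
  hence "{m', m' + 1} \<inter> {m, m + 1} = {}" using block_disjoint[OF assms(1,3,2)] by blast
  hence "m' \<noteq> m + 1" "m' + 1 \<noteq> m" by auto
  thus ?thesis using assms(4) by linarith
qed

lemma pairwise_disjnt_remove_block:
  assumes "pairwise disjnt \<pi>" "{m, m + 1} \<in> \<pi>"
  shows "pairwise disjnt (remove_block \<pi> m)"
  unfolding remove_block_eq pairwise_def disjnt_def
proof (intro ballI impI)
  fix X Y assume X: "X \<in> (\<lambda>b. shift2 m ` b) ` (\<pi> - {{m, m + 1}})"
    and Y: "Y \<in> (\<lambda>b. shift2 m ` b) ` (\<pi> - {{m, m + 1}})" and "X \<noteq> Y"
  then obtain b c where b: "b \<in> \<pi>" "b \<noteq> {m, m + 1}" "X = shift2 m ` b"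
    and c: "c \<in> \<pi>" "c \<noteq> {m, m + 1}" "Y = shift2 m ` c" and "b \<noteq> c"
    by blast
  have "b \<inter> c = {}" using assms(1) b c \<open>b \<noteq> c\<close> by (meson disjnt_def pairwiseD)
  moreover have "inj_on (shift2 m) (- {m, m + 1})"
    unfolding inj_on_def shift2_def by auto
  moreover have "b \<union> c \<subseteq> - {m, m + 1}"
    using block_disjoint[OF assms(1) b(1) assms(2) b(2)] block_disjoint[OF assms(1) c(1) assms(2) c(2)]
    by blast
  ultimately have "shift2 m ` b \<inter> shift2 m ` c = {}"
    by (metis inj_on_image_Int image_empty sup.bounded_iff)
  thus "X \<inter> Y = {}" using b(3) c(3) by simp
qed

lemma block_in_remove_block:
  assumes "{m', m' + 1} \<in> \<pi>" "m' + 1 < m \<or> m + 1 < m'"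
  shows "{shift2 m m', shift2 m m' + 1} \<in> remove_block \<pi> m"
proof -
  have "{m', m' + 1} \<in> \<pi> - {{m, m + 1}}" using assms by (auto simp: doubleton_eq_iff)
  moreover have "shift2 m ` {m', m' + 1} = {shift2 m m', shift2 m m' + 1}"
    using assms(2) by (auto simp: shift2_def)
  ultimately show ?thesis unfolding remove_block_eq by (metis rev_image_eqI)
qed

lemma shift2_adjacent:
  "m' + 1 < m \<or> m + 1 < m' \<Longrightarrow> 1 \<le> m \<Longrightarrow>
     shift2 m (m' - 1) = shift2 m m' - 1 \<and> shift2 m (m' + 1) = shift2 m m' + 1"
  by (auto simp: shift2_def)

lemma del2_commute:
  assumes "m' + 1 < m \<or> m + 1 < m'" "m + 2 \<le> length g" "m' + 2 \<le> length g"
  shows "del2 (shift2 m m') (del2 m g) = del2 (shift2 m' m) (del2 m' g)"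
proof (rule nth_equalityI)
  show "length (del2 (shift2 m m') (del2 m g)) = length (del2 (shift2 m' m) (del2 m' g))"
    using assms by (auto simp: length_del2 shift2_def)
  fix j assume "j < length (del2 (shift2 m m') (del2 m g))"
  hence "j < length g - 4" using assms by (auto simp: length_del2 shift2_def)
  thus "del2 (shift2 m m') (del2 m g) ! j = del2 (shift2 m' m) (del2 m' g) ! j"
    using assms by (auto simp: nth_del2 length_del2 shift2_def)
qed

lemma remove_block_remove_block:
  assumes disj: "pairwise disjnt \<pi>" and blk: "{m, m + 1} \<in> \<pi>" "{m', m' + 1} \<in> \<pi>"
    and sep: "m' + 1 < m \<or> m + 1 < m'"
  shows "remove_block (remove_block \<pi> m) (shift2 m m') =
         (\<lambda>b. (shift2 (shift2 m m') \<circ> shift2 m) ` b) ` (\<pi> - {{m, m + 1}, {m', m' + 1}})"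
proof -
  let ?c = "shift2 m m'"
  have "(\<lambda>b. shift2 m ` b) ` (\<pi> - {{m, m + 1}}) - {{?c, ?c + 1}} =
        (\<lambda>b. shift2 m ` b) ` (\<pi> - {{m, m + 1}, {m', m' + 1}})"
  proof
    have "shift2 m ` {m', m' + 1} = {?c, ?c + 1}" using sep by (auto simp: shift2_def)
    thus "(\<lambda>b. shift2 m ` b) ` (\<pi> - {{m, m + 1}}) - {{?c, ?c + 1}} \<subseteq>
          (\<lambda>b. shift2 m ` b) ` (\<pi> - {{m, m + 1}, {m', m' + 1}})" by auto
  next
    show "(\<lambda>b. shift2 m ` b) ` (\<pi> - {{m, m + 1}, {m', m' + 1}}) \<subseteq>
          (\<lambda>b. shift2 m ` b) ` (\<pi> - {{m, m + 1}}) - {{?c, ?c + 1}}"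
    proof
      fix Y assume "Y \<in> (\<lambda>b. shift2 m ` b) ` (\<pi> - {{m, m + 1}, {m', m' + 1}})"
      then obtain b where b: "b \<in> \<pi>" "b \<noteq> {m, m + 1}" "b \<noteq> {m', m' + 1}" "Y = shift2 m ` b"
        by auto
      have "b \<inter> {m, m + 1} = {}" "b \<inter> {m', m' + 1} = {}"
        using block_disjoint[OF disj b(1)] blk b(2,3) by blast+
      have "?c \<notin> Y"
      proof
        assume "?c \<in> Y"
        then obtain x where "x \<in> b" "shift2 m x = ?c" using b(4) by auto
        hence "x = m' \<or> x = m' + 1 \<or> x = m \<or> x = m + 1" using sep
          by (simp add: shift2_def split: if_splits; arith)
        thus False using \<open>x \<in> b\<close> \<open>b \<inter> {m, m + 1} = {}\<close> \<open>b \<inter> {m', m' + 1} = {}\<close> by auto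
      qed
      thus "Y \<in> (\<lambda>b. shift2 m ` b) ` (\<pi> - {{m, m + 1}}) - {{?c, ?c + 1}}" using b by auto
    qed
  qed
  thus ?thesis unfolding remove_block_eq by (simp add: image_image comp_def)
qed

lemma remove_block_commute:
  assumes "pairwise disjnt \<pi>" "{m, m + 1} \<in> \<pi>" "{m', m' + 1} \<in> \<pi>" "m' + 1 < m \<or> m + 1 < m'"
  shows "remove_block (remove_block \<pi> m) (shift2 m m') = remove_block (remove_block \<pi> m') (shift2 m' m)"
proof -
  have "shift2 (shift2 m m') \<circ> shift2 m = shift2 (shift2 m' m) \<circ> shift2 m'"
    using assms(4) by (auto simp: shift2_def fun_eq_iff)
  thus ?thesis using remove_block_remove_block[OF assms] remove_block_remove_block[of \<pi> m' m] assms
    by (simp add: insert_commute disj_commute)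
qed

section \<open>Adoptedness can be checked at a single block\<close>

text \<open>Conditions (a) and (b) of adoptedness at the block \<open>{m, m + 1}\<close>. List indices are
  0-based, so \<open>g ! m\<close> is the paper's \<open>g_(m+1)\<close>.\<close>
definition adopted_at :: "nat \<Rightarrow> 'a list \<Rightarrow> bool" where
  "adopted_at m g \<longleftrightarrow> g ! (m - 1) = g ! (m + 1) \<and> (\<forall>j<length g. j \<noteq> m \<longrightarrow> g ! j \<noteq> g ! m)"

lemma adopted_aux_Suc_Suc:
  "adopted_aux (Suc (Suc n)) \<pi> g \<longleftrightarrow>
     (\<forall>m. 1 \<le> m \<and> m \<le> length g - 2 \<and> {m, m + 1} \<in> \<pi> \<longrightarrow>
        adopted_at m g \<and> adopted_aux (Suc n) (remove_block \<pi> m) (del2 m g))"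
proof -
  have "(\<forall>s\<in>{1..length g}. s \<noteq> m + 1 \<longrightarrow> g ! m \<noteq> g ! (s - 1)) \<longleftrightarrow>
        (\<forall>j<length g. j \<noteq> m \<longrightarrow> g ! j \<noteq> g ! m)" for m
  proof
    assume "\<forall>s\<in>{1..length g}. s \<noteq> m + 1 \<longrightarrow> g ! m \<noteq> g ! (s - 1)"
    thus "\<forall>j<length g. j \<noteq> m \<longrightarrow> g ! j \<noteq> g ! m"
      by (metis Suc_eq_plus1 Suc_leI atLeastAtMost_iff diff_Suc_1 le_add2)
  next
    assume unique: "\<forall>j<length g. j \<noteq> m \<longrightarrow> g ! j \<noteq> g ! m"
    show "\<forall>s\<in>{1..length g}. s \<noteq> m + 1 \<longrightarrow> g ! m \<noteq> g ! (s - 1)"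
    proof (intro ballI impI)
      fix s assume "s \<in> {1..length g}" "s \<noteq> m + 1"
      hence "s - 1 < length g" "s - 1 \<noteq> m" by auto
      thus "g ! m \<noteq> g ! (s - 1)" using unique by metis
    qed
  qed
  thus ?thesis unfolding adopted_at_def by simp
qed

lemma adopted_at_del2_iff:
  assumes at: "adopted_at m g" and m: "1 \<le> m" "m + 1 < length g"
    and m': "1 \<le> m'" "m' + 1 < length g" and sep: "m' + 1 < m \<or> m + 1 < m'"
  shows "adopted_at (shift2 m m') (del2 m g) \<longleftrightarrow> adopted_at m' g"
proof -
  let ?g' = "del2 m g" and ?c = "shift2 m m'"
  have nth: "?g' ! shift2 m j = g ! j" if "j < length g" "j \<noteq> m" for j
    using nth_del2_shift2_returning at m that unfolding adopted_at_def by blast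
  have len: "length ?g' = length g - 2" using m by (simp add: length_del2)
  have ends: "?g' ! (?c - 1) = g ! (m' - 1)" "?g' ! (?c + 1) = g ! (m' + 1)" "?g' ! ?c = g ! m'"
    using nth[of "m' - 1"] nth[of "m' + 1"] nth[of m'] shift2_adjacent[OF sep m(1)] sep m' by auto
  have "(\<forall>j'<length ?g'. j' \<noteq> ?c \<longrightarrow> ?g' ! j' \<noteq> ?g' ! ?c) \<longleftrightarrow>
        (\<forall>j<length g. j \<noteq> m' \<longrightarrow> g ! j \<noteq> g ! m')"
  proof
    assume unique': "\<forall>j'<length ?g'. j' \<noteq> ?c \<longrightarrow> ?g' ! j' \<noteq> ?g' ! ?c"
    show "\<forall>j<length g. j \<noteq> m' \<longrightarrow> g ! j \<noteq> g ! m'"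
    proof (intro allI impI)
      fix j assume j: "j < length g" "j \<noteq> m'"
      show "g ! j \<noteq> g ! m'"
      proof (cases "j = m")
        case True
        have "g ! m' \<noteq> g ! m" using at m' sep unfolding adopted_at_def by auto
        thus ?thesis using True by simp
      next
        case False
        have "shift2 m j < length ?g'" "shift2 m j \<noteq> ?c"
          using False j m sep len by (auto simp: shift2_def)
        thus ?thesis using unique' nth[OF j(1) False] ends(3) by metis
      qed
    qed
  next
    assume unique: "\<forall>j<length g. j \<noteq> m' \<longrightarrow> g ! j \<noteq> g ! m'"
    show "\<forall>j'<length ?g'. j' \<noteq> ?c \<longrightarrow> ?g' ! j' \<noteq> ?g' ! ?c"
    proof (intro allI impI)
      fix j' assume j': "j' < length ?g'" "j' \<noteq> ?c"
      define j where "j = (if j' < m then j' else j' + 2)"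
      have "shift2 m j = j'" "j < length g" "j \<noteq> m" "j \<noteq> m'"
        using j' len m unfolding j_def by (auto simp: shift2_def)
      thus "?g' ! j' \<noteq> ?g' ! ?c" using unique nth ends(3) by metis
    qed
  qed
  thus ?thesis unfolding adopted_at_def ends len by simp
qed

lemma adopted_aux_if_adopted_at:
  assumes "length g = 2 * n + 4" "pairwise disjnt \<pi>" "{m, m + 1} \<in> \<pi>" "1 \<le> m" "m + 2 \<le> length g"
    "adopted_at m g" "adopted_aux (Suc n) (remove_block \<pi> m) (del2 m g)"
  shows "adopted_aux (Suc (Suc n)) \<pi> g"
  using assms
proof (induction n arbitrary: \<pi> g m)
  case (0 \<pi> g m)
  show ?case unfolding adopted_aux_Suc_Suc
  proof (intro allI impI)
    fix m' assume m': "1 \<le> m' \<and> m' \<le> length g - 2 \<and> {m', m' + 1} \<in> \<pi>"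
    have "m' = m"
    proof (rule ccontr)
      assume "m' \<noteq> m"
      hence "m' + 1 < m \<or> m + 1 < m'" using blocks_separated[OF "0.prems"(2,3)] m' by blast
      thus False using m' "0.prems"(1,4,5) by auto
    qed
    thus "adopted_at m' g \<and> adopted_aux (Suc 0) (remove_block \<pi> m') (del2 m' g)"
      using "0.prems" by simp
  qed
next
  case (Suc n \<pi> g m)
  note len = Suc.prems(1) and disj = Suc.prems(2) and blk = Suc.prems(3)
    and m = Suc.prems(4,5) and at = Suc.prems(6)
  show ?case unfolding adopted_aux_Suc_Suc[of "Suc n"]
  proof (intro allI impI)
    fix m' assume "1 \<le> m' \<and> m' \<le> length g - 2 \<and> {m', m' + 1} \<in> \<pi>"
    hence m': "1 \<le> m'" "m' + 2 \<le> length g" and blk': "{m', m' + 1} \<in> \<pi>" using len by auto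
    show "adopted_at m' g \<and> adopted_aux (Suc (Suc n)) (remove_block \<pi> m') (del2 m' g)"
    proof (cases "m' = m")
      case True thus ?thesis using Suc.prems by simp
    next
      case False
      hence sep: "m' + 1 < m \<or> m + 1 < m'" using blocks_separated[OF disj blk blk'] by blast
      hence sep': "m + 1 < m' \<or> m' + 1 < m" by auto
      have "1 \<le> shift2 m m' \<and> shift2 m m' \<le> length (del2 m g) - 2 \<and>
            {shift2 m m', shift2 m m' + 1} \<in> remove_block \<pi> m"
        using block_in_remove_block[OF blk' sep] sep m m' by (auto simp: length_del2 shift2_def)
      hence reduced: "adopted_at (shift2 m m') (del2 m g)"
        "adopted_aux (Suc n) (remove_block (remove_block \<pi> m) (shift2 m m')) (del2 (shift2 m m') (del2 m g))"
        using Suc.prems(7) unfolding adopted_aux_Suc_Suc by blast+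
      have at': "adopted_at m' g" using reduced(1) adopted_at_del2_iff[OF at _ _ m'(1) _ sep] m m' by simp
      have "adopted_aux (Suc (Suc n)) (remove_block \<pi> m') (del2 m' g)"
      proof (rule Suc.IH)
        show "length (del2 m' g) = 2 * n + 4" using len m' by (simp add: length_del2)
        show "pairwise disjnt (remove_block \<pi> m')" by (rule pairwise_disjnt_remove_block[OF disj blk'])
        show "{shift2 m' m, shift2 m' m + 1} \<in> remove_block \<pi> m'" by (rule block_in_remove_block[OF blk sep'])
        show "1 \<le> shift2 m' m" "shift2 m' m + 2 \<le> length (del2 m' g)"
          using sep m m' by (auto simp: length_del2 shift2_def)
        show "adopted_at (shift2 m' m) (del2 m' g)"
          using adopted_at_del2_iff[OF at' _ _ m(1) _ sep'] at m m' by simp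
        show "adopted_aux (Suc n) (remove_block (remove_block \<pi> m') (shift2 m' m)) (del2 (shift2 m' m) (del2 m' g))"
          using reduced(2) remove_block_commute[OF disj blk blk' sep] del2_commute[OF sep m(2) m'(2)] by simp
      qed
      thus ?thesis using at' by simp
    qed
  qed
qed

lemma adopted_if_adopted_at:
  assumes "even (length g)" "4 \<le> length g" "pairwise disjnt \<pi>" "{m, m + 1} \<in> \<pi>" "1 \<le> m"
    "m + 2 \<le> length g" "adopted_at m g" "adopted (remove_block \<pi> m) (del2 m g)"
  shows "adopted \<pi> g"
proof -
  obtain q where "length g = 2 * q" using assms(1) by (elim evenE)
  then obtain n where n: "length g = 2 * n + 4" using assms(2) by (intro that[of "q - 2"]) simp
  hence "length (del2 m g) div 2 = Suc n" using assms(6) by (simp add: length_del2)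
  thus ?thesis using adopted_aux_if_adopted_at[OF n assms(3-7)] assms(8) n unfolding adopted_def by simp
qed

section \<open>Counting words entry by entry\<close>

definition next_entries :: "'a list set \<Rightarrow> nat \<Rightarrow> 'a list \<Rightarrow> 'a set" where
  "next_entries A t p = {w ! t | w. w \<in> A \<and> take t w = p}"

lemma card_take_Suc_le:
  assumes fin: "finite A" and len: "\<forall>w\<in>A. t < length w" and bnd: "\<And>p. card (next_entries A t p) \<le> F"
  shows "card (take (Suc t) ` A) \<le> card (take t ` A) * F"
proof -
  let ?S = "SIGMA p:take t ` A. next_entries A t p"
  have fin_next: "finite (next_entries A t p)" for p
  proof (rule finite_subset[OF _ finite_imageI[OF fin]])
    show "next_entries A t p \<subseteq> (\<lambda>w. w ! t) ` A" unfolding next_entries_def by auto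
  qed
  have "take (Suc t) ` A \<subseteq> (\<lambda>(p, x). p @ [x]) ` ?S"
  proof
    fix y assume "y \<in> take (Suc t) ` A"
    then obtain w where w: "w \<in> A" "y = take (Suc t) w" by auto
    hence "y = take t w @ [w ! t]" using len by (simp add: take_Suc_conv_app_nth)
    moreover have "(take t w, w ! t) \<in> ?S" using w unfolding next_entries_def by auto
    ultimately show "y \<in> (\<lambda>(p, x). p @ [x]) ` ?S" by force
  qed
  hence "card (take (Suc t) ` A) \<le> card ((\<lambda>(p, x). p @ [x]) ` ?S)"
    by (intro card_mono) (use fin fin_next in auto)
  also have "\<dots> \<le> card ?S" by (rule card_image_le) (use fin fin_next in auto)
  also have "\<dots> = (\<Sum>p\<in>take t ` A. card (next_entries A t p))" using fin fin_next by simp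
  also have "\<dots> \<le> card (take t ` A) * F" using sum_bounded_above[of "take t ` A" "\<lambda>p. card (next_entries A t p)" F] bnd by simp
  finally show ?thesis .
qed

lemma card_le_card_take_prod:
  assumes fin: "finite A" and len: "\<forall>w\<in>A. length w = n" and "j \<le> n"
    and bnd: "\<And>t p. j \<le> t \<Longrightarrow> t < n \<Longrightarrow> card (next_entries A t p) \<le> f t"
  shows "card A \<le> card (take j ` A) * (\<Prod>t\<in>{j..<n}. f t)"
proof -
  have "card (take (j + d) ` A) \<le> card (take j ` A) * (\<Prod>t\<in>{j..<j + d}. f t)" if "j + d \<le> n" for d
    using that
  proof (induction d)
    case (Suc d)
    have "card (take (Suc (j + d)) ` A) \<le> card (take (j + d) ` A) * f (j + d)"
      by (rule card_take_Suc_le[OF fin]) (use Suc.prems len bnd in auto)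
    also have "\<dots> \<le> card (take j ` A) * (\<Prod>t\<in>{j..<j + d}. f t) * f (j + d)"
      using Suc by (intro mult_right_mono) auto
    finally show ?case by (simp add: prod.atLeastLessThan_Suc mult.assoc)
  qed simp
  from this[of "n - j"] have "card (take n ` A) \<le> card (take j ` A) * (\<Prod>t\<in>{j..<n}. f t)"
    using \<open>j \<le> n\<close> by simp
  moreover have "take n ` A = A" using len by (simp add: image_cong)
  ultimately show ?thesis by simp
qed

lemma inj_rotate: "inj (rotate n)"
proof (induction n)
  case (Suc n)
  show ?case using inj_compose[OF inj_rotate1 Suc.IH] by (simp add: comp_def)
qed simp

definition rot_pos :: "nat \<Rightarrow> nat \<Rightarrow> nat \<Rightarrow> nat" where
  "rot_pos k d u = (u + d) mod k + 1"

lemma rot_pos_range: "0 < k \<Longrightarrow> rot_pos k d u \<in> {1..k}"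
  unfolding rot_pos_def by (auto simp: Suc_le_eq)

lemma nth_rot_pos:
  assumes "length i = k" "u < k"
  shows "i ! (rot_pos k d u - 1) = rotate d i ! u"
    and "i ! (rot_pos k d u mod k) = rotate d i ! ((u + 1) mod k)"
proof -
  show "i ! (rot_pos k d u - 1) = rotate d i ! u"
    using assms by (simp add: nth_rotate rot_pos_def add.commute)
  have "rot_pos k d u mod k = (d + (u + 1) mod k) mod k"
    unfolding rot_pos_def by (simp add: mod_Suc_eq mod_add_right_eq add.commute add.left_commute)
  thus "i ! (rot_pos k d u mod k) = rotate d i ! ((u + 1) mod k)"
    using assms by (simp add: nth_rotate)
qed

lemma Eset_finite: "finite (Eset R N k \<pi>)"
proof (rule finite_subset)
  show "Eset R N k \<pi> \<subseteq> {xs. set xs \<subseteq> {1..N} \<and> length xs = k}" unfolding Eset_def by auto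
qed (rule finite_lists_length_eq[OF finite_atLeastAtMost])

lemma Eset_related:
  assumes "i \<in> Eset R N k \<pi>" "l \<in> {1..k}" "l' \<in> {1..k}" "b \<in> \<pi>" "l \<in> b" "l' \<in> b"
  shows "R N (i ! (l - 1), i ! (l mod k)) (i ! (l' - 1), i ! (l' mod k))"
  using assms unfolding Eset_def by blast

lemma nth_rotate_Eset:
  assumes "i \<in> Eset R N k \<pi>" "j < k"
  shows "rotate d i ! j \<in> {1..N}"
proof -
  have "length i = k" "set i \<subseteq> {1..N}" using assms(1) unfolding Eset_def by auto
  thus ?thesis using nth_mem[of j "rotate d i"] assms(2) by auto
qed

lemma rotate_Eset_related:
  assumes i: "i \<in> Eset R N k \<pi>" and uv: "u < k" "v < k"
    and b: "b \<in> \<pi>" "rot_pos k d u \<in> b" "rot_pos k d v \<in> b"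
  shows "R N (rotate d i ! u, rotate d i ! ((u + 1) mod k)) (rotate d i ! v, rotate d i ! ((v + 1) mod k))"
proof -
  have len: "length i = k" and "0 < k" using i uv unfolding Eset_def by auto
  hence "R N (i ! (rot_pos k d u - 1), i ! (rot_pos k d u mod k)) (i ! (rot_pos k d v - 1), i ! (rot_pos k d v mod k))"
    using Eset_related[OF i rot_pos_range rot_pos_range b(1-3)] by simp
  thus ?thesis by (simp only: nth_rot_pos[OF len uv(1)] nth_rot_pos[OF len uv(2)])
qed

definition partner_card_le :: "(nat \<Rightarrow> nat \<times> nat \<Rightarrow> nat \<times> nat \<Rightarrow> bool) \<Rightarrow> nat \<Rightarrow> nat \<Rightarrow> bool" where
  "partner_card_le R N B \<longleftrightarrow>
     (\<forall>p\<in>{1..N}. \<forall>q\<in>{1..N}. \<forall>r\<in>{1..N}. card {s \<in> {1..N}. R N (p, q) (r, s)} \<le> B)"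

text \<open>Entry \<open>t\<close> of a rotated word closes the pair \<open>t - 1\<close>. If that pair shares its block
  with an earlier pair, whose entries are then all known, (C2) leaves at most \<open>B\<close> choices.\<close>
definition paired_before :: "nat \<Rightarrow> nat \<Rightarrow> nat set set \<Rightarrow> nat \<Rightarrow> bool" where
  "paired_before k d \<pi> t \<longleftrightarrow> (\<exists>u < t - 1. \<exists>b\<in>\<pi>. rot_pos k d u \<in> b \<and> rot_pos k d (t - 1) \<in> b)"

lemma card_next_entries_rotate_le:
  assumes A: "A \<subseteq> Eset R N k \<pi>" and t: "t < k" and B: "partner_card_le R N B"
  shows "card (next_entries (rotate d ` A) t p) \<le> (if paired_before k d \<pi> t then B else N)"
proof (cases "paired_before k d \<pi> t")
  case False
  have "next_entries (rotate d ` A) t p \<subseteq> {1..N}"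
    using A t nth_rotate_Eset unfolding next_entries_def by blast
  thus ?thesis using False card_mono[of "{1..N}"] by fastforce
next
  case True
  then obtain u b where u: "u < t - 1" and b: "b \<in> \<pi>" "rot_pos k d u \<in> b" "rot_pos k d (t - 1) \<in> b"
    unfolding paired_before_def by blast
  show ?thesis
  proof (cases "next_entries (rotate d ` A) t p = {}")
    case False
    then obtain i0 where i0: "i0 \<in> A" "take t (rotate d i0) = p" unfolding next_entries_def by auto
    let ?w0 = "rotate d i0"
    have "next_entries (rotate d ` A) t p \<subseteq> {s \<in> {1..N}. R N (?w0 ! u, ?w0 ! (u + 1)) (?w0 ! (t - 1), s)}"
    proof
      fix x assume "x \<in> next_entries (rotate d ` A) t p"
      then obtain i where i: "i \<in> A" "take t (rotate d i) = p" "x = rotate d i ! t"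
        unfolding next_entries_def by auto
      have "rotate d i ! j = ?w0 ! j" if "j < t" for j using i(2) i0(2) that by (metis nth_take)
      moreover have "R N (rotate d i ! u, rotate d i ! (u + 1)) (rotate d i ! (t - 1), rotate d i ! t)"
        using rotate_Eset_related[of i R N k \<pi> u "t - 1" b d] i(1) A b u t by auto
      ultimately show "x \<in> {s \<in> {1..N}. R N (?w0 ! u, ?w0 ! (u + 1)) (?w0 ! (t - 1), s)}"
        using i A t u nth_rotate_Eset by (auto simp: subset_iff)
    qed
    moreover have "?w0 ! u \<in> {1..N}" and "?w0 ! (u + 1) \<in> {1..N}" and "?w0 ! (t - 1) \<in> {1..N}"
      using i0 A u t nth_rotate_Eset by auto
    ultimately have "card (next_entries (rotate d ` A) t p) \<le> card {s \<in> {1..N}. R N (?w0 ! u, ?w0 ! (u + 1)) (?w0 ! (t - 1), s)}"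
      by (intro card_mono) auto
    also have "\<dots> \<le> B" using B \<open>?w0 ! u \<in> {1..N}\<close> \<open>?w0 ! (u + 1) \<in> {1..N}\<close> \<open>?w0 ! (t - 1) \<in> {1..N}\<close>
      unfolding partner_card_le_def by blast
    finally show ?thesis using True by simp
  qed simp
qed

lemma pair_partition_finite: "pair_partition k \<pi> \<Longrightarrow> finite \<pi>"
  unfolding pair_partition_def by (intro finite_subset[of \<pi> "Pow {1..k}"]) auto

lemma pair_partition_card: "pair_partition k \<pi> \<Longrightarrow> 2 * card \<pi> = k"
proof -
  assume pp: "pair_partition k \<pi>"
  have "card (\<Union>\<pi>) = (\<Sum>b\<in>\<pi>. card b)"
  proof (rule card_Union_disjoint)
    show "pairwise disjnt \<pi>" using pp unfolding pair_partition_def pairwise_def disjnt_def by blast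
    show "finite b" if "b \<in> \<pi>" for b
      using pp that unfolding pair_partition_def by (intro card_ge_0_finite) simp
  qed
  also have "\<dots> = 2 * card \<pi>" using pp unfolding pair_partition_def by simp
  finally show ?thesis using pp unfolding pair_partition_def by simp
qed

lemma pair_partition_disjoint: "pair_partition k \<pi> \<Longrightarrow> pairwise disjnt \<pi>"
  unfolding pair_partition_def pairwise_def disjnt_def by simp

text \<open>An entry that is not paired before is the first to close a pair of its block, so distinct
  such entries lie in distinct blocks.\<close>
lemma card_not_paired_before_le:
  assumes pp: "pair_partition k \<pi>" and k: "0 < k" and b0: "b0 \<in> \<pi>" and S: "S \<subseteq> {1..<k}"
    and avoid: "\<forall>t\<in>S. rot_pos k d (t - 1) \<notin> b0"
  shows "card {t \<in> S. \<not> paired_before k d \<pi> t} \<le> card \<pi> - 1"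
proof -
  let ?F = "{t \<in> S. \<not> paired_before k d \<pi> t}"
  define blk where "blk t = (SOME b. b \<in> \<pi> \<and> rot_pos k d (t - 1) \<in> b)" for t
  have blk: "blk t \<in> \<pi> \<and> rot_pos k d (t - 1) \<in> blk t" for t
  proof -
    have "rot_pos k d (t - 1) \<in> \<Union>\<pi>" using rot_pos_range[OF k] pp unfolding pair_partition_def by auto
    hence "\<exists>b. b \<in> \<pi> \<and> rot_pos k d (t - 1) \<in> b" by blast
    thus ?thesis unfolding blk_def by (rule someI_ex)
  qed
  have "inj_on blk ?F"
  proof (rule inj_onI, rule ccontr)
    fix t1 t2 assume t: "t1 \<in> ?F" "t2 \<in> ?F" "blk t1 = blk t2" "t1 \<noteq> t2"
    have "1 \<le> t1" "1 \<le> t2" using t S by auto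
    hence "min t1 t2 - 1 < max t1 t2 - 1" using t(4) by linarith
    moreover have "rot_pos k d (min t1 t2 - 1) \<in> blk t1" "rot_pos k d (max t1 t2 - 1) \<in> blk t1"
      using blk[of t1] blk[of t2] t(3) by (simp_all add: min_def max_def)
    ultimately have "paired_before k d \<pi> (max t1 t2)"
      unfolding paired_before_def using blk[of t1] by blast
    moreover have "max t1 t2 \<in> ?F" using t(1,2) by (simp add: max_def)
    ultimately show False by simp
  qed
  hence "card ?F = card (blk ` ?F)" by (simp add: card_image)
  also have "\<dots> \<le> card (\<pi> - {b0})"
    using blk avoid pair_partition_finite[OF pp] by (intro card_mono) auto
  also have "\<dots> = card \<pi> - 1" using b0 pair_partition_finite[OF pp] by simp
  finally show ?thesis .
qed

lemma prod_if_le: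
  fixes B N :: nat
  assumes "finite S" "1 \<le> B" "1 \<le> N" "card S \<le> K" "card {t \<in> S. \<not> P t} \<le> c"
  shows "(\<Prod>t\<in>S. if P t then B else N) \<le> B ^ K * N ^ c"
proof -
  have "(\<Prod>t\<in>S. if P t then B else N) = B ^ card {t \<in> S. P t} * N ^ card {t \<in> S. \<not> P t}"
    using prod.If_cases[OF assms(1), of P "\<lambda>_. B" "\<lambda>_. N"] by (simp add: Int_def Diff_eq conj_commute)
  also have "\<dots> \<le> B ^ K * N ^ c"
  proof (intro mult_mono power_increasing)
    show "card {t \<in> S. P t} \<le> K" using assms(1,4) card_mono[of S "{t \<in> S. P t}"] by auto
  qed (use assms in auto)
  finally show ?thesis .
qed

lemma prod_paired_before_le:
  fixes B N :: nat
  assumes pp: "pair_partition k \<pi>" and "0 < k" "b0 \<in> \<pi>" "S \<subseteq> {1..<k}"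
    and "\<forall>t\<in>S. rot_pos k d (t - 1) \<notin> b0" and "1 \<le> B" "1 \<le> N"
  shows "(\<Prod>t\<in>S. if paired_before k d \<pi> t then B else N) \<le> B ^ k * N ^ (k div 2 - 1)"
proof (rule prod_if_le)
  show "finite S" using assms(4) finite_subset by blast
  show "card S \<le> k" using card_mono[OF _ assms(4)] by simp
  show "card {t \<in> S. \<not> paired_before k d \<pi> t} \<le> k div 2 - 1"
    using card_not_paired_before_le[OF assms(1-5)] pair_partition_card[OF pp] by simp
qed (use assms in auto)

section \<open>The three kinds of non-adopted words\<close>

declare rotate_Suc [simp del] \<comment> \<open>keeps \<open>rotate (m + 1)\<close> from unfolding into \<open>rotate1\<close>\<close>

lemma mod_less_double: "(a::nat) < 2 * k \<Longrightarrow> a mod k = (if a < k then a else a - k)"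
  by (simp add: le_mod_geq)

lemma rot_pos_not_in_block:
  assumes "1 \<le> m" "m < k" "m + 1 \<le> u + d" "u + d + 2 \<le> k + m"
  shows "rot_pos k d u \<notin> {m, m + 1}"
  using assms mod_less_double[of "u + d" k] unfolding rot_pos_def by (auto split: if_splits)

definition adjacent_triples :: "(nat \<Rightarrow> nat \<times> nat \<Rightarrow> nat \<times> nat \<Rightarrow> bool) \<Rightarrow> nat \<Rightarrow> (nat \<times> nat \<times> nat) set" where
  "adjacent_triples R N =
     {(p, q, r). p \<in> {1..N} \<and> q \<in> {1..N} \<and> r \<in> {1..N} \<and> R N (p, q) (q, r) \<and> r \<noteq> p}"

lemma finite_adjacent_triples: "finite (adjacent_triples R N)"
  by (rule finite_subset[of _ "{1..N} \<times> {1..N} \<times> {1..N}"]) (auto simp: adjacent_triples_def)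

lemma take_3_rotate:
  assumes "length i = k" "1 \<le> m" "m + 1 < k"
  shows "take 3 (rotate (m - 1) i) = [i ! (m - 1), i ! m, i ! (m + 1)]"
proof -
  have "rotate (m - 1) i ! j = i ! (m - 1 + j)" if "j < 3" for j
    using assms that by (simp add: nth_rotate)
  thus ?thesis using assms by (intro nth_equalityI) (auto simp: less_Suc_eq numeral_3_eq_3 nth_Cons')
qed

lemma nonreturning_mem_adjacent_triples:
  assumes i: "i \<in> Eset R N k \<pi>" and blk: "{m, m + 1} \<in> \<pi>" "1 \<le> m" "m + 1 < k"
    and "i ! (m - 1) \<noteq> i ! (m + 1)"
  shows "(i ! (m - 1), i ! m, i ! (m + 1)) \<in> adjacent_triples R N"
proof -
  have "R N (i ! (m - 1), i ! (m mod k)) (i ! (m + 1 - 1), i ! ((m + 1) mod k))"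
    by (rule Eset_related[OF i _ _ blk(1)]) (use blk in auto)
  moreover have "i ! j \<in> {1..N}" if "j < k" for j using nth_rotate_Eset[OF i that, of 0] by simp
  ultimately show ?thesis unfolding adjacent_triples_def using assms by auto
qed

lemma card_Eset_nonreturning_le:
  assumes pp: "pair_partition k \<pi>" and k: "4 \<le> k" and blk: "{m, m + 1} \<in> \<pi>" "1 \<le> m" "m \<le> k - 2"
    and B: "partner_card_le R N B" "1 \<le> B" and N: "1 \<le> N"
  shows "card {i \<in> Eset R N k \<pi>. i ! (m - 1) \<noteq> i ! (m + 1)}
           \<le> card (adjacent_triples R N) * (B ^ k * N ^ (k div 2 - 1))"
proof -
  define C where "C = {i \<in> Eset R N k \<pi>. i ! (m - 1) \<noteq> i ! (m + 1)}"
  define A where "A = rotate (m - 1) ` C"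
  have CE: "C \<subseteq> Eset R N k \<pi>" unfolding C_def by auto
  have lenA: "\<forall>w\<in>A. length w = k" using CE unfolding A_def Eset_def by auto
  have "card C = card A" unfolding A_def by (rule card_image[symmetric, OF inj_on_subset[OF inj_rotate subset_UNIV]])
  also have "\<dots> \<le> card (take 3 ` A) * (\<Prod>t\<in>{3..<k}. if paired_before k (m - 1) \<pi> t then B else N)"
    using finite_subset[OF CE Eset_finite] k card_next_entries_rotate_le[OF CE _ B(1)] unfolding A_def
    by (intro card_le_card_take_prod[OF _ lenA[unfolded A_def]]) auto
  also have "\<dots> \<le> card (adjacent_triples R N) * (B ^ k * N ^ (k div 2 - 1))"
  proof (rule mult_mono)
    have "take 3 ` A \<subseteq> (\<lambda>(p, q, r). [p, q, r]) ` adjacent_triples R N"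
    proof
      fix y assume "y \<in> take 3 ` A"
      then obtain i where i: "i \<in> C" "y = take 3 (rotate (m - 1) i)" unfolding A_def by auto
      hence "i \<in> Eset R N k \<pi>" "length i = k" "i ! (m - 1) \<noteq> i ! (m + 1)" unfolding C_def Eset_def by auto
      hence "y = [i ! (m - 1), i ! m, i ! (m + 1)]"
        and "(i ! (m - 1), i ! m, i ! (m + 1)) \<in> adjacent_triples R N"
        using i(2) take_3_rotate[of i k m] nonreturning_mem_adjacent_triples[OF _ blk(1,2)] k blk(2,3)
        by simp_all
      thus "y \<in> (\<lambda>(p, q, r). [p, q, r]) ` adjacent_triples R N" by force
    qed
    hence "card (take 3 ` A) \<le> card ((\<lambda>(p, q, r). [p, q, r]) ` adjacent_triples R N)"
      by (intro card_mono) (auto simp: finite_adjacent_triples)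
    also have "\<dots> \<le> card (adjacent_triples R N)" by (rule card_image_le[OF finite_adjacent_triples])
    finally show "card (take 3 ` A) \<le> card (adjacent_triples R N)" .
    have "\<forall>t\<in>{3..<k}. rot_pos k (m - 1) (t - 1) \<notin> {m, m + 1}"
    proof
      fix t assume "t \<in> {3..<k}"
      thus "rot_pos k (m - 1) (t - 1) \<notin> {m, m + 1}" by (intro rot_pos_not_in_block) (use blk in auto)
    qed
    thus "(\<Prod>t\<in>{3..<k}. if paired_before k (m - 1) \<pi> t then B else N) \<le> B ^ k * N ^ (k div 2 - 1)"
      using k by (intro prod_paired_before_le[OF pp _ blk(1) _ _ B(2) N]) auto
  qed auto
  finally show ?thesis unfolding C_def .
qed

lemma card_next_entries_eq_first_le:
  assumes "0 < t" "\<forall>w\<in>A. w ! t = w ! 0"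
  shows "card (next_entries A t p) \<le> 1"
proof -
  have "next_entries A t p \<subseteq> {p ! 0}" unfolding next_entries_def using assms by auto
  thus ?thesis using card_mono[of "{p ! 0}"] by fastforce
qed

lemma card_next_entries_repeat_le:
  assumes "\<forall>w\<in>A. t < length w \<and> (\<exists>u<t. w ! u = w ! t)"
  shows "card (next_entries A t p) \<le> t"
proof (cases "next_entries A t p = {}")
  case False
  then obtain w0 where "w0 \<in> A" "take t w0 = p" unfolding next_entries_def by auto
  hence "length p = t" using assms by auto
  moreover have "next_entries A t p \<subseteq> set p"
  proof
    fix x assume "x \<in> next_entries A t p"
    then obtain w where w: "w \<in> A" "take t w = p" "x = w ! t" unfolding next_entries_def by blast
    then obtain u where "u < t" "w ! u = x" using assms by blast
    hence "p ! u = x" using w(2) by auto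
    thus "x \<in> set p" using \<open>u < t\<close> \<open>length p = t\<close> nth_mem by blast
  qed
  hence "card (next_entries A t p) \<le> card (set p)" by (intro card_mono) auto
  thus ?thesis using card_length[of p] \<open>length p = t\<close> by simp
qed simp

lemma rotate_after_block:
  assumes "length i = k" "1 \<le> m" "m + 2 \<le> k"
  shows "rotate (m + 1) i ! 0 = i ! (m + 1)" "rotate (m + 1) i ! (k - 2) = i ! (m - 1)"
    and "rotate (m + 1) i ! (k - 1) = i ! m"
proof -
  have "m + 1 + (k - 2) = (m - 1) + k" "m + 1 + (k - 1) = m + k" using assms by auto
  moreover have "((m - 1) + k) mod k = m - 1" "(m + k) mod k = m"
    by (simp_all only: mod_add_self2) (use assms in simp_all)
  ultimately have "(m + 1 + (k - 2)) mod k = m - 1" "(m + 1 + (k - 1)) mod k = m" by simp_all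
  thus "rotate (m + 1) i ! 0 = i ! (m + 1)" "rotate (m + 1) i ! (k - 2) = i ! (m - 1)"
    "rotate (m + 1) i ! (k - 1) = i ! m"
    using assms nth_rotate[of _ i "m + 1"] by simp_all
qed

lemma rotate_repeated_middle:
  assumes "length i = k" "1 \<le> m" "m + 2 \<le> k" "j < k" "j \<noteq> m" "i ! j = i ! m"
  shows "\<exists>u<k - 1. rotate (m + 1) i ! u = rotate (m + 1) i ! (k - 1)"
proof -
  define u where "u = (j + (k - (m + 1))) mod k"
  have "(m + 1 + u) mod k = (m + 1 + (j + (k - (m + 1)))) mod k"
    unfolding u_def by (rule mod_add_right_eq)
  also have "m + 1 + (j + (k - (m + 1))) = j + k" using assms by simp
  finally have "(m + 1 + u) mod k = j" using assms(4) by simp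
  moreover have "u < k" using assms unfolding u_def by simp
  ultimately have "rotate (m + 1) i ! u = i ! j" using assms(1) nth_rotate[of u i "m + 1"] by simp
  moreover have "u \<noteq> k - 1"
  proof
    assume "u = k - 1"
    hence "(m + 1 + u) mod k = m" using assms by (simp add: add.commute)
    thus False using \<open>(m + 1 + u) mod k = j\<close> assms(5) by simp
  qed
  ultimately show ?thesis using \<open>u < k\<close> rotate_after_block(3)[OF assms(1-3)] assms(6)
    by (intro exI[of _ u]) auto
qed

text \<open>Rotated to start right after the block, the word's entry before the block is forced
  to equal the first entry, and the middle entry of the block repeats an earlier one.\<close>
lemma card_Eset_repeated_middle_le:
  assumes pp: "pair_partition k \<pi>" and k: "4 \<le> k" and blk: "{m, m + 1} \<in> \<pi>" "1 \<le> m" "m \<le> k - 2"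
    and B: "partner_card_le R N B" "1 \<le> B" and N: "1 \<le> N"
  shows "card {i \<in> Eset R N k \<pi>. i ! (m - 1) = i ! (m + 1) \<and> (\<exists>j<k. j \<noteq> m \<and> i ! j = i ! m)}
           \<le> k * B ^ k * N ^ (k div 2)"
proof -
  define C where "C = {i \<in> Eset R N k \<pi>. i ! (m - 1) = i ! (m + 1) \<and> (\<exists>j<k. j \<noteq> m \<and> i ! j = i ! m)}"
  define A where "A = rotate (m + 1) ` C"
  define g where "g t = (if paired_before k (m + 1) \<pi> t then B else N)" for t
  define f where "f t = (if t = k - 2 then 1 else if t = k - 1 then k else g t)" for t
  have CE: "C \<subseteq> Eset R N k \<pi>" unfolding C_def by auto
  have lenC: "length i = k" if "i \<in> C" for i using that CE unfolding Eset_def by auto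
  have lenA: "\<forall>w\<in>A. length w = k" using lenC unfolding A_def by auto
  have "card C = card A" unfolding A_def by (rule card_image[symmetric, OF inj_on_subset[OF inj_rotate subset_UNIV]])
  also have "\<dots> \<le> card (take 1 ` A) * (\<Prod>t\<in>{1..<k}. f t)"
  proof (rule card_le_card_take_prod[OF _ lenA])
    fix t p assume t: "1 \<le> t" "t < k"
    have mk: "m + 2 \<le> k" using blk(3) k by simp
    have "\<forall>w\<in>A. w ! (k - 2) = w ! 0"
    proof
      fix w assume "w \<in> A"
      then obtain i where i: "i \<in> C" "w = rotate (m + 1) i" unfolding A_def by auto
      hence "i ! (m - 1) = i ! (m + 1)" unfolding C_def by simp
      thus "w ! (k - 2) = w ! 0" using rotate_after_block[OF lenC[OF i(1)] blk(2) mk] i(2) by simp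
    qed
    moreover have "\<forall>w\<in>A. k - 1 < length w \<and> (\<exists>u<k - 1. w ! u = w ! (k - 1))"
    proof
      fix w assume "w \<in> A"
      then obtain i where i: "i \<in> C" "w = rotate (m + 1) i" unfolding A_def by auto
      then obtain j where "j < k" "j \<noteq> m" "i ! j = i ! m" unfolding C_def by blast
      thus "k - 1 < length w \<and> (\<exists>u<k - 1. w ! u = w ! (k - 1))"
        using rotate_repeated_middle[OF lenC[OF i(1)] blk(2) mk] i lenC k by simp
    qed
    ultimately have "card (next_entries A (k - 2) p) \<le> 1" "card (next_entries A (k - 1) p) \<le> k - 1"
      using card_next_entries_eq_first_le[of "k - 2" A p] card_next_entries_repeat_le[of A "k - 1" p] k
      by simp_all
    moreover have "card (next_entries A t p) \<le> g t"
      using card_next_entries_rotate_le[OF CE t(2) B(1), of "m + 1" p] unfolding g_def A_def .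
    ultimately show "card (next_entries A t p) \<le> f t" unfolding f_def by auto
  qed (use finite_subset[OF CE Eset_finite] k in \<open>auto simp: A_def\<close>)
  also have "\<dots> \<le> N * (B ^ k * N ^ (k div 2 - 1) * k)"
  proof (rule mult_mono)
    have "take 1 ` A \<subseteq> (\<lambda>x. [x]) ` {1..N}"
    proof
      fix y assume "y \<in> take 1 ` A"
      then obtain i where i: "i \<in> C" "y = take 1 (rotate (m + 1) i)" unfolding A_def by auto
      hence "y = [rotate (m + 1) i ! 0]" using lenC[OF i(1)] k by (cases "rotate (m + 1) i") auto
      moreover have "rotate (m + 1) i ! 0 \<in> {1..N}" using nth_rotate_Eset[of i] i(1) CE k by auto
      ultimately show "y \<in> (\<lambda>x. [x]) ` {1..N}" by blast
    qed
    hence "card (take 1 ` A) \<le> card ((\<lambda>x. [x]) ` {1..N})" by (intro card_mono) auto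
    also have "\<dots> \<le> N" using card_image_le[of "{1..N}" "\<lambda>x. [x]"] by simp
    finally show "card (take 1 ` A) \<le> N" .
    have "(\<Prod>t\<in>{1..<k}. f t) = (\<Prod>t\<in>{1..<k - 1}. f t) * f (k - 1)"
      using prod.atLeastLessThan_Suc[of 1 "k - 1" f] k by simp
    also have "(\<Prod>t\<in>{1..<k - 1}. f t) = (\<Prod>t\<in>{1..<k - 2}. f t) * f (k - 2)"
      using prod.atLeastLessThan_Suc[of 1 "k - 2" f] k by (simp add: Suc_diff_Suc numeral_2_eq_2)
    finally have "(\<Prod>t\<in>{1..<k}. f t) = (\<Prod>t\<in>{1..<k - 2}. f t) * f (k - 2) * f (k - 1)" .
    moreover have "(\<Prod>t\<in>{1..<k - 2}. f t) = (\<Prod>t\<in>{1..<k - 2}. g t)" by (rule prod.cong) (auto simp: f_def)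
    moreover have "f (k - 2) = 1" "f (k - 1) = k" using k unfolding f_def by auto
    ultimately have split: "(\<Prod>t\<in>{1..<k}. f t) = (\<Prod>t\<in>{1..<k - 2}. g t) * k" by simp
    have "\<forall>t\<in>{1..<k - 2}. rot_pos k (m + 1) (t - 1) \<notin> {m, m + 1}"
    proof
      fix t assume "t \<in> {1..<k - 2}"
      thus "rot_pos k (m + 1) (t - 1) \<notin> {m, m + 1}" by (intro rot_pos_not_in_block) (use blk in auto)
    qed
    hence "(\<Prod>t\<in>{1..<k - 2}. g t) \<le> B ^ k * N ^ (k div 2 - 1)"
      unfolding g_def using k by (intro prod_paired_before_le[OF pp _ blk(1) _ _ B(2) N]) auto
    thus "(\<Prod>t\<in>{1..<k}. f t) \<le> B ^ k * N ^ (k div 2 - 1) * k" unfolding split by simp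
  qed auto
  also have "\<dots> = k * B ^ k * N ^ (k div 2)"
  proof -
    have "Suc (k div 2 - 1) = k div 2" using k by simp
    hence "N * N ^ (k div 2 - 1) = N ^ (k div 2)" by (metis power_Suc)
    thus ?thesis by (simp add: algebra_simps)
  qed
  finally show ?thesis unfolding C_def .
qed

lemma mem_shift2_image_iff:
  assumes "b \<inter> {m, m + 1} = {}"
  shows "l \<in> shift2 m ` b \<longleftrightarrow> (if l < m then l else l + 2) \<in> b"
proof
  assume "l \<in> shift2 m ` b"
  then obtain x where "x \<in> b" "l = shift2 m x" by auto
  moreover have "x \<noteq> m" "x \<noteq> m + 1" using assms \<open>x \<in> b\<close> by auto
  moreover have "m < x \<Longrightarrow> x - 2 + 2 = x" using \<open>x \<noteq> m + 1\<close> by arith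
  ultimately show "(if l < m then l else l + 2) \<in> b" by (auto simp: shift2_def)
next
  assume "(if l < m then l else l + 2) \<in> b"
  moreover have "shift2 m (if l < m then l else l + 2) = l" by (simp add: shift2_def)
  ultimately show "l \<in> shift2 m ` b" by (metis image_eqI)
qed

lemma del2_mem_Eset:
  assumes disj: "pairwise disjnt \<pi>" and k: "4 \<le> k" and blk: "{m, m + 1} \<in> \<pi>" "1 \<le> m" "m \<le> k - 2"
    and i: "i \<in> Eset R N k \<pi>" and ret: "i ! (m - 1) = i ! (m + 1)"
  shows "del2 m i \<in> Eset R N (k - 2) (remove_block \<pi> m)"
proof -
  let ?i' = "del2 m i"
  define \<sigma> where "\<sigma> l = (if l < m then l else l + 2)" for l
  have li: "length i = k" and si: "set i \<subseteq> {1..N}" using i unfolding Eset_def by auto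
  have nth: "?i' ! shift2 m j = i ! j" if "j < k" "j \<noteq> m" for j
    using nth_del2_shift2_returning[OF ret blk(2)] li blk k that by simp
  have \<sigma>: "\<sigma> l \<in> {1..k}" "\<sigma> l \<notin> {m, m + 1}" if "l \<in> {1..k - 2}" for l
    using that k blk unfolding \<sigma>_def by auto
  have pair: "?i' ! (l - 1) = i ! (\<sigma> l - 1)" "?i' ! (l mod (k - 2)) = i ! (\<sigma> l mod k)"
    if l: "l \<in> {1..k - 2}" for l
  proof -
    have "\<sigma> l - 1 < k" "\<sigma> l - 1 \<noteq> m" "shift2 m (\<sigma> l - 1) = l - 1"
      using l k blk unfolding \<sigma>_def by (auto simp: shift2_def)
    thus "?i' ! (l - 1) = i ! (\<sigma> l - 1)" using nth[of "\<sigma> l - 1"] by simp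
    show "?i' ! (l mod (k - 2)) = i ! (\<sigma> l mod k)"
    proof (cases "l = k - 2")
      case True
      have "l mod (k - 2) = 0" "\<sigma> l = k" using True k blk unfolding \<sigma>_def by auto
      moreover have "?i' ! 0 = i ! 0" using nth[of 0] k blk by (simp add: shift2_def)
      ultimately show ?thesis by simp
    next
      case False
      hence "l mod (k - 2) = l" "\<sigma> l mod k = \<sigma> l" "\<sigma> l < k" "\<sigma> l \<noteq> m" "shift2 m (\<sigma> l) = l"
        using l k blk unfolding \<sigma>_def by (auto simp: shift2_def)
      thus ?thesis using nth[of "\<sigma> l"] by simp
    qed
  qed
  have mem: "l \<in> shift2 m ` b \<longleftrightarrow> \<sigma> l \<in> b" if "b \<in> \<pi> - {{m, m + 1}}" for b l
    using mem_shift2_image_iff[OF block_disjoint[OF disj _ blk(1)]] that unfolding \<sigma>_def by simp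
  have blocks: "(\<exists>b\<in>remove_block \<pi> m. l \<in> b \<and> l' \<in> b) \<longleftrightarrow> (\<exists>b\<in>\<pi>. \<sigma> l \<in> b \<and> \<sigma> l' \<in> b)"
    if "l \<in> {1..k - 2}" for l l'
  proof -
    have "(\<exists>b\<in>remove_block \<pi> m. l \<in> b \<and> l' \<in> b) \<longleftrightarrow>
          (\<exists>b\<in>\<pi> - {{m, m + 1}}. l \<in> shift2 m ` b \<and> l' \<in> shift2 m ` b)"
      by (auto simp: remove_block_eq)
    also have "\<dots> \<longleftrightarrow> (\<exists>b\<in>\<pi> - {{m, m + 1}}. \<sigma> l \<in> b \<and> \<sigma> l' \<in> b)"
      by (rule bex_cong[OF refl]) (simp add: mem)
    also have "\<dots> \<longleftrightarrow> (\<exists>b\<in>\<pi>. \<sigma> l \<in> b \<and> \<sigma> l' \<in> b)"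
      using \<sigma>(2)[OF that] by auto
    finally show ?thesis .
  qed
  show ?thesis unfolding Eset_def
  proof (intro CollectI conjI ballI)
    show "length ?i' = k - 2" using li blk by (simp add: length_del2)
    show "set ?i' \<subseteq> {1..N}" using si unfolding del2_def by (auto dest: in_set_takeD in_set_dropD)
    fix l l' assume l: "l \<in> {1..k - 2}" and l': "l' \<in> {1..k - 2}"
    have "(\<exists>b\<in>\<pi>. \<sigma> l \<in> b \<and> \<sigma> l' \<in> b) \<longleftrightarrow>
          R N (i ! (\<sigma> l - 1), i ! (\<sigma> l mod k)) (i ! (\<sigma> l' - 1), i ! (\<sigma> l' mod k))"
      using i \<sigma>(1)[OF l] \<sigma>(1)[OF l'] unfolding Eset_def by blast
    thus "(\<exists>b\<in>remove_block \<pi> m. l \<in> b \<and> l' \<in> b) \<longleftrightarrow>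
          R N (?i' ! (l - 1), ?i' ! (l mod (k - 2))) (?i' ! (l' - 1), ?i' ! (l' mod (k - 2)))"
      using blocks[OF l, of l'] pair[OF l] pair[OF l'] by simp
  qed
qed

lemma card_Ebar_adopted_at_le:
  assumes pp: "pair_partition k \<pi>" and k: "even k" "4 \<le> k" and blk: "{m, m + 1} \<in> \<pi>" "1 \<le> m" "m \<le> k - 2"
  shows "card {i \<in> Ebar R N k \<pi>. adopted_at m i} \<le> N * card (Ebar R N (k - 2) (remove_block \<pi> m))"
proof -
  define C where "C = {i \<in> Ebar R N k \<pi>. adopted_at m i}"
  define \<phi> where "\<phi> i = (del2 m i, i ! m)" for i :: "nat list"
  have disj: "pairwise disjnt \<pi>" using pair_partition_disjoint[OF pp] .
  have CE: "C \<subseteq> Eset R N k \<pi>" unfolding C_def Ebar_def by auto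
  have len: "length i = k" if "i \<in> C" for i using that CE unfolding Eset_def by auto
  have nth: "del2 m i ! shift2 m j = i ! j" if "i \<in> C" "j < k" "j \<noteq> m" for i j
    using nth_del2_shift2_returning[of i m j] that len[OF that(1)] blk k unfolding C_def adopted_at_def by auto
  have "inj_on \<phi> C"
  proof (rule inj_onI)
    fix i1 i2 assume i: "i1 \<in> C" "i2 \<in> C" and "\<phi> i1 = \<phi> i2"
    hence del: "del2 m i1 = del2 m i2" and mid: "i1 ! m = i2 ! m" unfolding \<phi>_def by auto
    show "i1 = i2"
    proof (rule nth_equalityI)
      show "length i1 = length i2" using len i by simp
      fix j assume "j < length i1"
      thus "i1 ! j = i2 ! j" using mid nth[OF i(1)] nth[OF i(2)] del len[OF i(1)] by (cases "j = m") auto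
    qed
  qed
  moreover have "\<phi> ` C \<subseteq> Ebar R N (k - 2) (remove_block \<pi> m) \<times> {1..N}"
  proof
    fix y assume "y \<in> \<phi> ` C"
    then obtain i where i: "i \<in> C" "y = \<phi> i" by auto
    have iE: "i \<in> Eset R N k \<pi>" and "\<not> adopted \<pi> i" and at: "adopted_at m i"
      using i(1) unfolding C_def Ebar_def by auto
    have "even (length i)" "4 \<le> length i" "m + 2 \<le> length i" using len[OF i(1)] k blk by auto
    hence "\<not> adopted (remove_block \<pi> m) (del2 m i)"
      using adopted_if_adopted_at[OF _ _ disj blk(1,2) _ at] \<open>\<not> adopted \<pi> i\<close> by blast
    moreover have "del2 m i \<in> Eset R N (k - 2) (remove_block \<pi> m)"
      using del2_mem_Eset[OF disj k(2) blk iE] at unfolding adopted_at_def by simp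
    moreover have "i ! m \<in> {1..N}" using nth_rotate_Eset[OF iE, of m 0] blk k by simp
    ultimately show "y \<in> Ebar R N (k - 2) (remove_block \<pi> m) \<times> {1..N}"
      using i(2) unfolding \<phi>_def Ebar_def by simp
  qed
  moreover have "finite (Ebar R N (k - 2) (remove_block \<pi> m))"
    using Eset_finite unfolding Ebar_def by simp
  ultimately have "card C \<le> card (Ebar R N (k - 2) (remove_block \<pi> m) \<times> {1..N})"
    by (metis card_inj_on_le finite_SigmaI finite_atLeastAtMost)
  thus ?thesis unfolding C_def by (simp add: card_cartesian_product mult.commute)
qed

lemma card_Ebar_le:
  assumes pp: "pair_partition k \<pi>" and k: "even k" "4 \<le> k" and blk: "{m, m + 1} \<in> \<pi>" "1 \<le> m" "m \<le> k - 2"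
    and B: "partner_card_le R N B" "1 \<le> B" and N: "1 \<le> N"
  shows "card (Ebar R N k \<pi>) \<le> card (adjacent_triples R N) * (B ^ k * N ^ (k div 2 - 1))
           + k * B ^ k * N ^ (k div 2) + N * card (Ebar R N (k - 2) (remove_block \<pi> m))"
proof -
  let ?A = "{i \<in> Eset R N k \<pi>. i ! (m - 1) \<noteq> i ! (m + 1)}"
  let ?B = "{i \<in> Eset R N k \<pi>. i ! (m - 1) = i ! (m + 1) \<and> (\<exists>j<k. j \<noteq> m \<and> i ! j = i ! m)}"
  let ?G = "{i \<in> Ebar R N k \<pi>. adopted_at m i}"
  have "Ebar R N k \<pi> \<subseteq> ?A \<union> ?B \<union> ?G"
  proof
    fix i assume i: "i \<in> Ebar R N k \<pi>"
    hence "i \<in> Eset R N k \<pi>" "length i = k" unfolding Ebar_def Eset_def by auto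
    thus "i \<in> ?A \<union> ?B \<union> ?G" using i unfolding adopted_at_def by auto
  qed
  moreover have "finite ?A" "finite ?B" "finite ?G" using Eset_finite unfolding Ebar_def by auto
  ultimately have "card (Ebar R N k \<pi>) \<le> card ?A + card ?B + card ?G"
    by (meson card_Un_le card_mono finite_UnI add_mono le_trans order_refl)
  also have "\<dots> \<le> card (adjacent_triples R N) * (B ^ k * N ^ (k div 2 - 1))
           + k * B ^ k * N ^ (k div 2) + N * card (Ebar R N (k - 2) (remove_block \<pi> m))"
    using card_Eset_nonreturning_le[OF pp k(2) blk B N] card_Eset_repeated_middle_le[OF pp k(2) blk B N]
      card_Ebar_adopted_at_le[OF pp k blk] by (intro add_mono)
  finally show ?thesis .
qed

section \<open>Asymptotics\<close>

lemma one_smallo_real_of_nat: "(\<lambda>_. 1::real) \<in> o[at_top](\<lambda>N::nat. real N)"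
  by (intro smallo_real_nat_transfer smalloI_tendsto)
     (auto simp: tendsto_inverse_0_at_top filterlim_ident eventually_at_top_linorder
           intro!: exI[of _ 1] simp flip: inverse_eq_divide)

lemma power_smallo_power_Suc: "(\<lambda>N::nat. c * real N ^ h) \<in> o[at_top](\<lambda>N. real N ^ (1 + h))"
  using landau_o.small_power_increasing[OF one_smallo_real_of_nat, of h "1 + h"] by simp

lemma smallo_square_mult_power:
  fixes f :: "nat \<Rightarrow> real"
  assumes "f \<in> o[at_top](\<lambda>N. real N ^ 2)" "1 \<le> h"
  shows "(\<lambda>N. f N * c * real N ^ (h - 1)) \<in> o[at_top](\<lambda>N. real N ^ (1 + h))"
proof -
  have "(\<lambda>N. f N * (c * real N ^ (h - 1))) \<in> o[at_top](\<lambda>N. real N ^ 2 * real N ^ (h - 1))"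
    using assms(1) by (rule landau_o.small_big_mult) simp
  moreover have "real N ^ 2 * real N ^ (h - 1) = real N ^ (1 + h)" for N :: nat
    using assms(2) by (simp flip: power_add)
  ultimately show ?thesis by (simp add: mult.assoc)
qed

theorem mainTheorem6:
  fixes R :: "nat \<Rightarrow> nat \<times> nat \<Rightarrow> nat \<times> nat \<Rightarrow> bool"
    and k m :: nat and \<pi> :: "nat set set"
  assumes equiv_R: "\<And>N. equiv ({1..N} \<times> {1..N})
                      {(x, y). x \<in> {1..N} \<times> {1..N} \<and> y \<in> {1..N} \<times> {1..N} \<and> R N x y}"
    and swap_R: "\<And>N p q. p \<in> {1..N} \<Longrightarrow> q \<in> {1..N} \<Longrightarrow> R N (p, q) (q, p)"
    and C2: "\<exists>B::nat. \<forall>N p q r. p \<in> {1..N} \<longrightarrow> q \<in> {1..N} \<longrightarrow> r \<in> {1..N} \<longrightarrow>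
               card {s \<in> {1..N}. R N (p, q) (r, s)} \<le> B"
    and C3: "(\<lambda>N. real (card {(p, q, r). p \<in> {1..N} \<and> q \<in> {1..N} \<and> r \<in> {1..N} \<and>
                                   R N (p, q) (q, r) \<and> r \<noteq> p}))
             \<in> o[at_top](\<lambda>N. real N ^ 2)"
    and k: "even k" "k \<ge> 4"
    and \<pi>: "NCPP k \<pi>"
    and blk: "{m, m + 1} \<in> \<pi>" "1 \<le> m" "m \<le> k - 2"
  shows "\<exists>g :: nat \<Rightarrow> real. g \<in> o[at_top](\<lambda>N. real N ^ (1 + k div 2)) \<and>
           (\<forall>\<^sub>F N in at_top. real (card (Ebar R N k \<pi>))
              \<le> real N * real (card (Ebar R N (k - 2) (remove_block \<pi> m))) + g N)"
proof -
  obtain B0 where "\<forall>N p q r. p \<in> {1..N} \<longrightarrow> q \<in> {1..N} \<longrightarrow> r \<in> {1..N} \<longrightarrow>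
      card {s \<in> {1..N}. R N (p, q) (r, s)} \<le> B0" using C2 by blast
  hence B: "partner_card_le R N (max B0 1)" for N unfolding partner_card_le_def by (meson le_max_iff_disj)
  have pp: "pair_partition k \<pi>" using \<pi> unfolding NCPP_def by simp
  define T where "T N = real (card (adjacent_triples R N))" for N
  define g where "g N = T N * real (max B0 1 ^ k) * real N ^ (k div 2 - 1)
                        + real (k * max B0 1 ^ k) * real N ^ (k div 2)" for N
  have "T \<in> o[at_top](\<lambda>N. real N ^ 2)" using C3 unfolding T_def adjacent_triples_def .
  hence "g \<in> o[at_top](\<lambda>N. real N ^ (1 + k div 2))"
    unfolding g_def using k by (intro sum_in_smallo smallo_square_mult_power power_smallo_power_Suc) auto
  moreover have "real (card (Ebar R N k \<pi>)) \<le> real N * real (card (Ebar R N (k - 2) (remove_block \<pi> m))) + g N"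
    if "1 \<le> N" for N
    using of_nat_mono[OF card_Ebar_le[OF pp k blk B _ that]] by (simp add: g_def T_def algebra_simps)
  ultimately show ?thesis using eventually_ge_at_top[of 1] by (blast intro: eventually_mono)
qed

end
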